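(* Let $V=\mathbb{C}^4$, with basis $e_1,\dots,e_4$ and dual basis $\alpha_1,\dots,\alpha_4$. Let $$T_4=\sum_{1\le i<j\le 4}\big(\alpha_i\otimes\alpha_j-\alpha_j\otimes\alpha_i\big)\otimes(e_i\wedge e_j)\in V^*\otimes V^*\otimes\Lambda^2V\cong\mathbb{C}^4\otimes\mathbb{C}^4\otimes\mathbb{C}^6.$$ Then $\underline{R}(T_4)=8$.
   Context: The border rank $\underline{R}(T)$ is the smallest $r$ such that $T$ is a limit of sums of $r$ rank-one tensors. *)

theory Defs
  imports Complex_Main
begin

text \<open>A tensor in C^I (x) C^J (x) C^K, for finite index sets I, J, K, is given by its
coordinate function T :: 'a => 'b => 'c => complex (values outside I x J x K irrelevant).
T has border rank at most r iff it is a limit (coordinatewise, equivalently in the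
Euclidean topology of the finite-dimensional space) of a sequence of such sums.\<close>

definition border_rank_le ::
  "'a set \<Rightarrow> 'b set \<Rightarrow> 'c set \<Rightarrow> ('a \<Rightarrow> 'b \<Rightarrow> 'c \<Rightarrow> complex) \<Rightarrow> nat \<Rightarrow> bool" where
  "border_rank_le I J K T r \<longleftrightarrow>
     (\<exists>(a :: nat \<Rightarrow> nat \<Rightarrow> 'a \<Rightarrow> complex) (b :: nat \<Rightarrow> nat \<Rightarrow> 'b \<Rightarrow> complex)
        (c :: nat \<Rightarrow> nat \<Rightarrow> 'c \<Rightarrow> complex).
        \<forall>i\<in>I. \<forall>j\<in>J. \<forall>k\<in>K.
          (\<lambda>n. \<Sum>l<r. a n l i * b n l j * c n l k) \<longlonglongrightarrow> T i j k)"

definition border_rank ::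
  "'a set \<Rightarrow> 'b set \<Rightarrow> 'c set \<Rightarrow> ('a \<Rightarrow> 'b \<Rightarrow> 'c \<Rightarrow> complex) \<Rightarrow> nat" where
  "border_rank I J K T = (LEAST r. border_rank_le I J K T r)"

text \<open>Index set of the basis e_i wedge e_j (i<j) of Lambda^2 C^4, indices 0..3.\<close>
definition wedge_idx :: "(nat \<times> nat) set" where
  "wedge_idx = {(i, j). i < j \<and> j < 4}"

text \<open>Coefficient of alpha_a (x) alpha_b (x) (e_i wedge e_j) in T_4.\<close>
definition T4 :: "nat \<Rightarrow> nat \<Rightarrow> nat \<times> nat \<Rightarrow> complex" where
  "T4 a b p = (case p of (i, j) \<Rightarrow>
      if a = i \<and> b = j then 1 else if a = j \<and> b = i then -1 else 0)"

end

theory Submission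
  imports Defs "HOL-Analysis.Analysis" "HOL-Computational_Algebra.Polynomial"
begin

text \<open>
  Lower bound: the Koszul flattening \<open>T\<^sup>\<and>\<^sup>1\<^sub>A : A \<otimes> C\<^sup>* \<rightarrow> \<Lambda>\<^sup>2A \<otimes> B\<close> is a
  \<open>24 \<times> 24\<close> matrix depending linearly on \<open>T\<close>. For a rank-one tensor \<open>x \<otimes> y \<otimes> z\<close> its rank
  is that of \<open>x \<and> -\<close>, which is at most 3 because \<open>x \<and> x = 0\<close>. Hence its determinant vanishes
  on sums of at most 7 rank-one tensors, and by continuity on all tensors of border rank at
  most 7, whereas the Koszul flattening of \<open>T\<^sub>4\<close> is invertible.

  Upper bound: an explicit family of eight rank-one tensors with polynomial coefficients in
  \<open>t\<close> whose sum is \<open>t\<^sup>3 T\<^sub>4 + O(t\<^sup>4)\<close>.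
\<close>

lemma det_sum_outer_products_eq_0:
  fixes u :: "'k \<Rightarrow> 'n::finite \<Rightarrow> 'a::field" and v :: "'k \<Rightarrow> 'n \<Rightarrow> 'a"
  assumes "finite K" and "card K < CARD('n)"
  shows "det (\<chi> i j. \<Sum>\<kappa>\<in>K. u \<kappa> i * v \<kappa> j :: 'a^'n^'n) = 0"
proof -
  obtain f :: "'k \<Rightarrow> 'n" where inj: "inj_on f K"
    using card_le_inj[of K "UNIV :: 'n set"] assms by auto
  have "card (f ` K) < CARD('n)"
    using assms(2) card_image[OF inj] by simp
  then have "f ` K \<noteq> UNIV"
    by auto
  then obtain s0 where s0: "s0 \<notin> f ` K"
    by blast
  define g where "g = inv_into K f"
  define U :: "'a^'n^'n" where "U = (\<chi> i s. if s \<in> f ` K then u (g s) i else 0)"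
  define W :: "'a^'n^'n" where "W = (\<chi> s j. if s \<in> f ` K then v (g s) j else 0)"
  have "(U ** W) $ i $ j = (\<Sum>\<kappa>\<in>K. u \<kappa> i * v \<kappa> j)" for i j
  proof -
    have "(U ** W) $ i $ j = (\<Sum>s\<in>f ` K. u (g s) i * v (g s) j)"
      by (simp add: matrix_matrix_mult_def U_def W_def if_distrib sum.If_cases Int_absorb1
          cong: if_cong)
    also have "\<dots> = (\<Sum>\<kappa>\<in>K. u \<kappa> i * v \<kappa> j)"
      by (simp add: sum.reindex[OF inj] g_def inv_into_f_f[OF inj])
    finally show ?thesis .
  qed
  then have "(\<chi> i j. \<Sum>\<kappa>\<in>K. u \<kappa> i * v \<kappa> j) = U ** W"
    by (simp add: vec_eq_iff)
  moreover have "det U = 0"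
    by (rule det_zero_column(2)[of s0]) (simp add: column_def U_def s0 vec_eq_iff)
  ultimately show ?thesis
    by (simp add: det_mul)
qed

lemma tendsto_det:
  fixes M :: "'b \<Rightarrow> 'a::real_normed_field^'n^'n"
  assumes "\<And>i j. ((\<lambda>x. M x $ i $ j) \<longlongrightarrow> L $ i $ j) F"
  shows "((\<lambda>x. det (M x)) \<longlongrightarrow> det L) F"
  unfolding det_def by (intro tendsto_sum tendsto_mult tendsto_const tendsto_prod assms)

lemma tendsto_poly_div_power:
  fixes p :: "'a::real_normed_field poly"
  assumes "\<And>e. e < d \<Longrightarrow> coeff p e = 0"
    and "(t \<longlongrightarrow> 0) F" and "\<forall>\<^sub>F x in F. t x \<noteq> 0"
  shows "((\<lambda>x. poly p (t x) / t x ^ d) \<longlongrightarrow> coeff p d) F"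
proof -
  have "monom 1 d dvd p"
    using assms(1) by (simp add: monom_1_dvd_iff')
  then obtain q where p: "p = monom 1 d * q"
    by (elim dvdE)
  have "\<forall>\<^sub>F x in F. poly q (t x) = poly p (t x) / t x ^ d"
    using assms(3) by eventually_elim (simp add: p poly_monom)
  moreover have "((\<lambda>x. poly q (t x)) \<longlongrightarrow> coeff p d) F"
    using tendsto_poly[OF assms(2), of q] by (simp add: p poly_0_coeff_0 coeff_monom_mult)
  ultimately show ?thesis
    by (rule Lim_transform_eventually[rotated])
qed

lemma border_rank_le_of_polynomial_degeneration:
  fixes a :: "nat \<Rightarrow> 'i \<Rightarrow> complex poly" and b :: "nat \<Rightarrow> 'j \<Rightarrow> complex poly"
    and c :: "nat \<Rightarrow> 'k \<Rightarrow> complex poly"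
  assumes "\<And>i j k e. i \<in> I \<Longrightarrow> j \<in> J \<Longrightarrow> k \<in> K \<Longrightarrow> e < d \<Longrightarrow>
      coeff (\<Sum>l<r. a l i * b l j * c l k) e = 0"
    and "\<And>i j k. i \<in> I \<Longrightarrow> j \<in> J \<Longrightarrow> k \<in> K \<Longrightarrow>
      coeff (\<Sum>l<r. a l i * b l j * c l k) d = T i j k"
  shows "border_rank_le I J K T r"
  unfolding border_rank_le_def
proof (intro exI ballI)
  fix i j k assume ijk: "i \<in> I" "j \<in> J" "k \<in> K"
  define t :: "nat \<Rightarrow> complex" where "t n = inverse (of_nat n)" for n
  have "\<forall>\<^sub>F n in sequentially. t n \<noteq> 0"
    by (auto simp: t_def eventually_sequentially intro: exI[of _ 1])
  moreover have "(t \<longlongrightarrow> 0) sequentially"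
    unfolding t_def by (rule lim_inverse_n)
  ultimately have "(\<lambda>n. poly (\<Sum>l<r. a l i * b l j * c l k) (t n) / t n ^ d) \<longlonglongrightarrow> T i j k"
    using tendsto_poly_div_power[of d "\<Sum>l<r. a l i * b l j * c l k" t sequentially]
      assms(1)[OF ijk] assms(2)[OF ijk] by argo
  then show "(\<lambda>n. \<Sum>l<r. poly (a l i) (t n) * poly (b l j) (t n) * (poly (c l k) (t n) / t n ^ d))
      \<longlonglongrightarrow> T i j k"
    by (simp add: poly_sum sum_divide_distrib)
qed

lemma eq_sum_delete_of_linear_relation:
  fixes f :: "'i \<Rightarrow> 'a::field"
  assumes "finite I" and "k \<in> I" and "c k \<noteq> 0" and "(\<Sum>i\<in>I. c i * f i) = 0" and "a \<in> I"
  shows "f a = (\<Sum>i\<in>I - {k}. f i * ((if a = i then 1 else 0) - (if a = k then c i / c k else 0)))"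
proof (cases "a = k")
  case True
  have "c k * f k = - (\<Sum>i\<in>I - {k}. c i * f i)"
    using assms(4) sum.remove[OF assms(1,2), of "\<lambda>i. c i * f i"] by (simp add: eq_neg_iff_add_eq_0)
  have "(\<Sum>i\<in>I - {k}. f i * ((if a = i then 1 else 0) - (if a = k then c i / c k else 0)))
      = (\<Sum>i\<in>I - {k}. - (c i * f i) / c k)"
    by (rule sum.cong) (auto simp: True)
  also have "\<dots> = c k * f k / c k"
    using \<open>c k * f k = _\<close> by (simp add: sum_divide_distrib[symmetric] sum_negf)
  also have "\<dots> = f a"
    using assms(3) True by simp
  finally show ?thesis ..
next
  case False
  have "(\<Sum>i\<in>I - {k}. f i * ((if a = i then 1 else 0) - (if a = k then c i / c k else 0)))
      = (\<Sum>i\<in>I - {k}. if a = i then f i else 0)"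
    by (rule sum.cong) (auto simp: False)
  also have "\<dots> = f a"
    using False assms(1,5) by (simp add: sum.delta')
  finally show ?thesis ..
qed

datatype ix4 = E0 | E1 | E2 | E3
datatype ix6 = E01 | E02 | E03 | E12 | E13 | E23

lemma UNIV_ix4: "(UNIV :: ix4 set) = {E0, E1, E2, E3}"
  using ix4.exhaust by auto

lemma UNIV_ix6: "(UNIV :: ix6 set) = {E01, E02, E03, E12, E13, E23}"
  using ix6.exhaust by auto

instance ix4 :: finite
  by standard (simp add: UNIV_ix4)

instance ix6 :: finite
  by standard (simp add: UNIV_ix6)

lemma sum_UNIV_ix4: "(\<Sum>a\<in>UNIV. f a) = f E0 + f E1 + f E2 + f E3"
  by (simp add: UNIV_ix4 algebra_simps)

lemma sum_UNIV_ix6: "(\<Sum>p\<in>UNIV. f p) = f E01 + f E02 + f E03 + f E12 + f E13 + f E23"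
  by (simp add: UNIV_ix6 algebra_simps)

lemma all_ix4: "(\<forall>a. P a) \<longleftrightarrow> P E0 \<and> P E1 \<and> P E2 \<and> P E3"
  by (metis ix4.exhaust)

lemma all_ix6: "(\<forall>p. P p) \<longleftrightarrow> P E01 \<and> P E02 \<and> P E03 \<and> P E12 \<and> P E13 \<and> P E23"
  by (metis ix6.exhaust)

lemma CARD_ix4: "CARD(ix4) = 4"
  by (simp add: UNIV_ix4)

lemma CARD_ix6: "CARD(ix6) = 6"
  by (simp add: UNIV_ix6)

fun nat_of_ix4 :: "ix4 \<Rightarrow> nat" where
  "nat_of_ix4 E0 = 0" | "nat_of_ix4 E1 = 1" | "nat_of_ix4 E2 = 2" | "nat_of_ix4 E3 = 3"

fun pair_of_ix6 :: "ix6 \<Rightarrow> nat \<times> nat" where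
  "pair_of_ix6 E01 = (0, 1)" | "pair_of_ix6 E02 = (0, 2)" | "pair_of_ix6 E03 = (0, 3)"
| "pair_of_ix6 E12 = (1, 2)" | "pair_of_ix6 E13 = (1, 3)" | "pair_of_ix6 E23 = (2, 3)"

lemma nat_of_ix4_less: "nat_of_ix4 a < 4"
  by (cases a) simp_all

lemma pair_of_ix6_in_wedge_idx: "pair_of_ix6 p \<in> wedge_idx"
  by (cases p) (simp_all add: wedge_idx_def)

definition wedge_coeff :: "ix4 \<Rightarrow> ix4 \<Rightarrow> ix6 \<Rightarrow> complex" where
  "wedge_coeff a b p =
     (if pair_of_ix6 p = (nat_of_ix4 a, nat_of_ix4 b) then 1
      else if pair_of_ix6 p = (nat_of_ix4 b, nat_of_ix4 a) then -1 else 0)"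

lemma T4_eq_wedge_coeff: "T4 (nat_of_ix4 a) (nat_of_ix4 b) (pair_of_ix6 p) = wedge_coeff a b p"
  by (cases p) (simp_all add: T4_def wedge_coeff_def)

text \<open>Row \<open>(b, p)\<close> stands for \<open>e\<^sub>p \<otimes> e\<^sub>b \<in> \<Lambda>\<^sup>2A \<otimes> B\<close>, column \<open>(a, c)\<close> for
  \<open>e\<^sub>a \<otimes> \<gamma>\<^sub>c \<in> A \<otimes> C\<^sup>*\<close>; the map sends \<open>e\<^sub>a \<otimes> \<gamma>\<^sub>c\<close> to
  \<open>\<Sum>a' b. T a' b c \<cdot> (e\<^sub>a\<^sub>' \<and> e\<^sub>a) \<otimes> e\<^sub>b\<close>.\<close>

definition koszul_flattening ::
  "(nat \<Rightarrow> nat \<Rightarrow> nat \<times> nat \<Rightarrow> complex) \<Rightarrow> complex^(ix4 \<times> ix6)^(ix4 \<times> ix6)" where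
  "koszul_flattening T = (\<chi> r s. \<Sum>a'\<in>UNIV.
     wedge_coeff a' (fst s) (snd r) * T (nat_of_ix4 a') (nat_of_ix4 (fst r)) (pair_of_ix6 (snd s)))"

definition wedge_left :: "(nat \<Rightarrow> complex) \<Rightarrow> ix4 \<Rightarrow> ix6 \<Rightarrow> complex" where
  "wedge_left x a p = (\<Sum>a'\<in>UNIV. wedge_coeff a' a p * x (nat_of_ix4 a'))"

lemma sum_wedge_left_self: "(\<Sum>a\<in>UNIV. x (nat_of_ix4 a) * wedge_left x a p) = 0"
  by (cases p) (simp_all add: wedge_left_def wedge_coeff_def sum_UNIV_ix4 algebra_simps)

text \<open>Since \<open>x \<and> x = 0\<close>, the map \<open>a \<mapsto> x \<and> e\<^sub>a\<close> factors through three coordinates.\<close>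

lemma wedge_left_factor:
  obtains k and m :: "ix4 \<Rightarrow> ix4 \<Rightarrow> complex"
  where "\<And>a p. wedge_left x a p = (\<Sum>i\<in>UNIV - {k}. wedge_left x i p * m a i)"
proof (cases "\<exists>k. x (nat_of_ix4 k) \<noteq> 0")
  case True
  then obtain k where "x (nat_of_ix4 k) \<noteq> 0"
    by blast
  have "wedge_left x a p = (\<Sum>i\<in>UNIV - {k}. wedge_left x i p *
      ((if a = i then 1 else 0) - (if a = k then x (nat_of_ix4 i) / x (nat_of_ix4 k) else 0)))"
    for a p
    by (rule eq_sum_delete_of_linear_relation) (use \<open>x (nat_of_ix4 k) \<noteq> 0\<close> sum_wedge_left_self in auto)
  then show ?thesis
    by (rule that)
next
  case False
  then have "wedge_left x a p = 0" for a p
    by (simp add: wedge_left_def)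
  then show ?thesis
    by (intro that[where m = "\<lambda>_ _. 0"]) simp
qed

lemma koszul_flattening_sum_rank_one:
  fixes x y :: "nat \<Rightarrow> nat \<Rightarrow> complex" and z :: "nat \<Rightarrow> nat \<times> nat \<Rightarrow> complex"
  obtains K :: "(nat \<times> ix4) set" and u v
  where "finite K" and "card K = 3 * r"
    and "koszul_flattening (\<lambda>i j k. \<Sum>l<r. x l i * y l j * z l k) = (\<chi> s t. \<Sum>\<kappa>\<in>K. u \<kappa> s * v \<kappa> t)"
proof -
  have "\<forall>l. \<exists>k m. \<forall>a p. wedge_left (x l) a p = (\<Sum>i\<in>UNIV - {k}. wedge_left (x l) i p * m a i)"
    by (metis wedge_left_factor)
  then obtain k m where km:
    "\<And>l a p. wedge_left (x l) a p = (\<Sum>i\<in>UNIV - {k l}. wedge_left (x l) i p * m l a i)"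
    by metis
  define K where "K = Sigma {..<r} (\<lambda>l. UNIV - {k l})"
  define u where "u \<kappa> s = y (fst \<kappa>) (nat_of_ix4 (fst s)) * wedge_left (x (fst \<kappa>)) (snd \<kappa>) (snd s)"
    for \<kappa> :: "nat \<times> ix4" and s :: "ix4 \<times> ix6"
  define v where "v \<kappa> t = z (fst \<kappa>) (pair_of_ix6 (snd t)) * m (fst \<kappa>) (fst t) (snd \<kappa>)"
    for \<kappa> :: "nat \<times> ix4" and t :: "ix4 \<times> ix6"
  have "finite K"
    by (simp add: K_def)
  moreover have "card K = 3 * r"
    by (simp add: K_def CARD_ix4)
  moreover have "koszul_flattening (\<lambda>i j k. \<Sum>l<r. x l i * y l j * z l k) $ s $ t
      = (\<Sum>\<kappa>\<in>K. u \<kappa> s * v \<kappa> t)" for s t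
  proof -
    have "koszul_flattening (\<lambda>i j k. \<Sum>l<r. x l i * y l j * z l k) $ s $ t
        = (\<Sum>l<r. y l (nat_of_ix4 (fst s)) * z l (pair_of_ix6 (snd t)) * wedge_left (x l) (fst t) (snd s))"
      by (simp add: koszul_flattening_def wedge_left_def sum_distrib_left sum_distrib_right
          mult_ac sum.swap[of _ UNIV])
    also have "\<dots> = (\<Sum>l<r. \<Sum>i\<in>UNIV - {k l}. u (l, i) s * v (l, i) t)"
      by (subst km) (simp add: u_def v_def sum_distrib_left mult_ac)
    also have "\<dots> = (\<Sum>\<kappa>\<in>K. u \<kappa> s * v \<kappa> t)"
      by (simp add: K_def sum.Sigma)
    finally show ?thesis .
  qed
  then have "koszul_flattening (\<lambda>i j k. \<Sum>l<r. x l i * y l j * z l k) = (\<chi> s t. \<Sum>\<kappa>\<in>K. u \<kappa> s * v \<kappa> t)"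
    by (simp add: vec_eq_iff)
  ultimately show ?thesis
    by (rule that)
qed

lemma det_koszul_flattening_sum_rank_one:
  fixes x y :: "nat \<Rightarrow> nat \<Rightarrow> complex" and z :: "nat \<Rightarrow> nat \<times> nat \<Rightarrow> complex"
  assumes "r < 8"
  shows "det (koszul_flattening (\<lambda>i j k. \<Sum>l<r. x l i * y l j * z l k)) = 0"
proof -
  obtain K :: "(nat \<times> ix4) set" and u v where "finite K" "card K = 3 * r"
    and "koszul_flattening (\<lambda>i j k. \<Sum>l<r. x l i * y l j * z l k) = (\<chi> s t. \<Sum>\<kappa>\<in>K. u \<kappa> s * v \<kappa> t)"
    by (rule koszul_flattening_sum_rank_one)
  moreover have "card K < CARD(ix4 \<times> ix6)"
    using assms \<open>card K = 3 * r\<close> by (simp add: CARD_ix4 CARD_ix6)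
  ultimately show ?thesis
    by (simp add: det_sum_outer_products_eq_0)
qed

lemma tendsto_det_koszul_flattening:
  assumes "\<And>i j k. i < 4 \<Longrightarrow> j < 4 \<Longrightarrow> k \<in> wedge_idx \<Longrightarrow> ((\<lambda>n. S n i j k) \<longlongrightarrow> T i j k) F"
  shows "((\<lambda>n. det (koszul_flattening (S n))) \<longlongrightarrow> det (koszul_flattening T)) F"
  unfolding koszul_flattening_def
  by (intro tendsto_det)
    (simp add: tendsto_sum tendsto_mult_left assms nat_of_ix4_less pair_of_ix6_in_wedge_idx)

lemma koszul_flattening_T4_kernel:
  assumes "koszul_flattening T4 *v v = 0"
  shows "v = 0"
proof -
  have self_neg: "x = - x \<longleftrightarrow> x = 0" for x :: complex
    by (auto simp: complex_eq_iff)
  have "\<forall>b p. (koszul_flattening T4 *v v) $ (b, p) = 0"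
    using assms by simp
  then have "\<forall>b p.
      (\<Sum>a\<in>UNIV. \<Sum>c\<in>UNIV. \<Sum>a'\<in>UNIV. wedge_coeff a' a p * wedge_coeff a' b c * v $ (a, c)) = 0"
    unfolding matrix_vector_mult_def UNIV_Times_UNIV[symmetric] sum.cartesian_product'
    by (simp add: koszul_flattening_def T4_eq_wedge_coeff sum_distrib_right)
  \<comment> \<open>These equations force \<open>v (a, c) = 0\<close> for \<open>a \<in> c\<close>; for each 3-set \<open>{a, b, c}\<close> they relate
    \<open>v (a, bc)\<close>, \<open>v (b, ac)\<close>, \<open>v (c, ab)\<close> by two equalities and one sign change.\<close>
  then have "\<forall>a c. v $ (a, c) = 0"
    unfolding all_ix4 all_ix6 sum_UNIV_ix4 sum_UNIV_ix6
    by (simp add: wedge_coeff_def) (elim conjE, simp add: add_eq_0_iff2 self_neg)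
  then show ?thesis
    by (simp add: vec_eq_iff)
qed

lemma det_koszul_flattening_T4: "det (koszul_flattening T4) \<noteq> 0"
  using koszul_flattening_T4_kernel
  by (metis invertible_det_nz invertible_left_inverse matrix_left_invertible_ker)

lemma T4_not_border_rank_le:
  assumes "r < 8"
  shows "\<not> border_rank_le {..<4} {..<4} wedge_idx T4 r"
proof
  assume "border_rank_le {..<4} {..<4} wedge_idx T4 r"
  then obtain x y :: "nat \<Rightarrow> nat \<Rightarrow> nat \<Rightarrow> complex" and z :: "nat \<Rightarrow> nat \<Rightarrow> nat \<times> nat \<Rightarrow> complex"
    where lim: "\<forall>i\<in>{..<4}. \<forall>j\<in>{..<4}. \<forall>k\<in>wedge_idx.
      (\<lambda>n. \<Sum>l<r. x n l i * y n l j * z n l k) \<longlonglongrightarrow> T4 i j k"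
    unfolding border_rank_le_def by blast
  have "(\<lambda>n. det (koszul_flattening (\<lambda>i j k. \<Sum>l<r. x n l i * y n l j * z n l k)))
      \<longlonglongrightarrow> det (koszul_flattening T4)"
    using lim by (intro tendsto_det_koszul_flattening) auto
  then have "det (koszul_flattening T4) = 0"
    by (simp add: det_koszul_flattening_sum_rank_one[OF assms] LIMSEQ_const_iff)
  with det_koszul_flattening_T4 show False ..
qed

text \<open>The \<open>l\<close>-th term of the degeneration is \<open>degen_a l \<otimes> degen_b l \<otimes> degen_c l\<close>, with
  \<open>[:0, 1:] = t\<close>. The coefficient of \<open>e\<^sub>i \<and> e\<^sub>j\<close> (\<open>i < j\<close>) in \<open>degen_c l\<close> is stored in
  row \<open>i\<close>, column \<open>j\<close> of the \<open>l\<close>-th (strictly upper triangular) block.\<close>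

definition degen_a :: "nat \<Rightarrow> nat \<Rightarrow> complex poly" where
  "degen_a l i =
     [[1, 0,  0,        [:0, 0, 1:]],
      [1, 0,  [:0, 1:], 0],
      [1, 0,  0,        [:0, 1:]],
      [0, 1,  0,        [:0, 0, -1:]],
      [0, 1,  [:0, 1:], 0],
      [0, 1,  0,        [:0, 1:]],
      [1, 1,  [:0, 1:], 0],
      [1, -1, 0,        [:0, 0, 1:]]] ! l ! i"

definition degen_b :: "nat \<Rightarrow> nat \<Rightarrow> complex poly" where
  "degen_b l j =
     [[1, 0,  0,         [:0, 0, 1:]],
      [1, 0,  [:0, -1:], 0],
      [1, 0,  0,         [:0, -1:]],
      [0, 1,  0,         [:0, 0, -1:]],
      [0, 1,  [:0, -1:], 0],
      [0, 1,  0,         [:0, -1:]],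
      [1, -1, 0,         [:0, 0, 1:]],
      [1, 1,  [:0, -1:], 0]] ! l ! j"

definition degen_c :: "nat \<Rightarrow> nat \<times> nat \<Rightarrow> complex poly" where
  "degen_c l k = (case k of (i, j) \<Rightarrow>
     [[[0, [:0, 0, 0, 1:],  [:0, 0, 1:],  [:0, 0, 1:] ], [0, 0, 0,            0           ], [0, 0, 0, -1]],
      [[0, 0,               [:0, 0, -1:], 0           ], [0, 0, 0,            0           ], [0, 0, 0, -1]],
      [[0, 0,               0,            [:0, 0, -1:]], [0, 0, 0,            0           ], [0, 0, 0, 0 ]],
      [[0, [:0, 0, 0, -1:], 0,            0           ], [0, 0, [:0, 0, 1:],  [:0, 0, 1:] ], [0, 0, 0, 1 ]],
      [[0, 0,               0,            0           ], [0, 0, [:0, 0, -1:], 0           ], [0, 0, 0, 1 ]],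
      [[0, 0,               0,            0           ], [0, 0, 0,            [:0, 0, -1:]], [0, 0, 0, 0 ]],
      [[0, [:0, 0, 0, -1:], 0,            0           ], [0, 0, 0,            0           ], [0, 0, 0, 1 ]],
      [[0, 0,               0,            0           ], [0, 0, 0,            0           ], [0, 0, 0, 1 ]]]
     ! l ! i ! j)"

lemma coeffs_sum_degen:
  assumes "i < 4" and "j < 4" and "k \<in> wedge_idx"
  defines "P \<equiv> \<Sum>l<8. degen_a l i * degen_b l j * degen_c l k"
  shows "coeff P 0 = 0 \<and> coeff P 1 = 0 \<and> coeff P 2 = 0 \<and> coeff P 3 = T4 i j k"
proof -
  have "i \<in> {0, 1, 2, 3}" and "j \<in> {0, 1, 2, 3}"
    using assms(1,2) by auto
  moreover have "k \<in> {(0, 1), (0, 2), (0, 3), (1, 2), (1, 3), (2, 3)}"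
    using assms(3) by (auto simp: wedge_idx_def)
  ultimately show ?thesis
    unfolding P_def
    by (auto simp: degen_a_def degen_b_def degen_c_def T4_def numeral_eq_Suc lessThan_Suc)
qed

lemma T4_border_rank_le_8: "border_rank_le {..<4} {..<4} wedge_idx T4 8"
proof (rule border_rank_le_of_polynomial_degeneration
    [where a = degen_a and b = degen_b and c = degen_c and d = 3])
  fix i j :: nat and k :: "nat \<times> nat" and e :: nat
  assume "i \<in> {..<4}" "j \<in> {..<4}" "k \<in> wedge_idx" "e < 3"
  then show "coeff (\<Sum>l<8. degen_a l i * degen_b l j * degen_c l k) e = 0"
    using coeffs_sum_degen[of i j k] by (auto simp: numeral_eq_Suc less_Suc_eq)
next
  fix i j :: nat and k :: "nat \<times> nat"
  assume "i \<in> {..<4}" "j \<in> {..<4}" "k \<in> wedge_idx"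
  then show "coeff (\<Sum>l<8. degen_a l i * degen_b l j * degen_c l k) 3 = T4 i j k"
    using coeffs_sum_degen[of i j k] by simp
qed

theorem proposition6:
  shows "border_rank {..<4} {..<4} wedge_idx T4 = 8"
  unfolding border_rank_def
  by (rule Least_equality) (use T4_border_rank_le_8 T4_not_border_rank_le not_less in blast)+

end
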